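(* Let $\rho\in\Delta_{|\mathcal S|}$ have all entries positive. For any non-optimal policy $\pi$, there exists a non-optimal state-action pair $(\bar s,\bar a)$ such that $\pi(\bar a\mid\bar s)>0$ and $$A^{\pi^*}(\bar s,\bar a)\ge\frac{1-\gamma}{|\mathcal S||\mathcal A|}\big[f_\rho(\pi)-f_\rho(\pi^* )\big]>0.$$
   Context: An unregularized infinite-horizon discounted MDP: finite state space $\mathcal S$, finite action space $\mathcal A$, transition probabilities $\mathcal P(s'\mid s,a)$, cost $c:\mathcal S\times\mathcal A\to\mathbb R$, discount $\gamma\in[0,1)$. A policy $\pi$ assigns $\pi(\cdot\mid s)\in\Delta_{|\mathcal A|}$ to each state. $V^\pi(s)=\mathbb E[\sum_{t\ge0}\gamma^tc(s_t,a_t)\mid s_0=s,\ a_t\sim\pi(\cdot\mid s_t),\ s_{t+1}\sim\mathcal P(\cdot\mid s_t,a_t)]$, $Q^\pi(s,a)$ the same with $a_0=a$, and $A^\pi(s,a):=Q^\pi(s,a)-V^\pi(s)$. $\pi^*$ is a fixed optimal policy ($V^{\pi^*}(s)\le V^\pi(s)$ for all $\pi,s$). For $\rho\in\Delta_{|\mathcal S|}$, $f_\rho(\pi):=\sum_s\rho(s)V^\pi(s)$. A pair $(s,a)$ is non-optimal if $\pi^*(a\mid s)=0$; a policy $\pi$ is non-optimal if $f_\rho(\pi)-f_\rho(\pi^* )>0$. *)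

theory Defs
  imports "HOL-Analysis.Analysis"
begin

text \<open>Finite state type 's, finite action type 'a. A transition kernel is
  P :: 's => 'a => 's => real with P s a s' = P(s' | s, a); a policy is
  p :: 's => 'a => real with p s a = p(a | s).\<close>

definition is_dist :: "('b::finite \<Rightarrow> real) \<Rightarrow> bool" where
  "is_dist d \<longleftrightarrow> (\<forall>x. 0 \<le> d x) \<and> (\<Sum>x\<in>UNIV. d x) = 1"

definition is_kernel :: "('s::finite \<Rightarrow> 'a::finite \<Rightarrow> 's \<Rightarrow> real) \<Rightarrow> bool" where
  "is_kernel P \<longleftrightarrow> (\<forall>s a. is_dist (P s a))"

definition is_policy :: "('s::finite \<Rightarrow> 'a::finite \<Rightarrow> real) \<Rightarrow> bool" where
  "is_policy p \<longleftrightarrow> (\<forall>s. is_dist (p s))"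

fun state_dist :: "('s::finite \<Rightarrow> 'a::finite \<Rightarrow> 's \<Rightarrow> real) \<Rightarrow> ('s \<Rightarrow> 'a \<Rightarrow> real)
    \<Rightarrow> ('s \<Rightarrow> real) \<Rightarrow> nat \<Rightarrow> 's \<Rightarrow> real" where
  "state_dist P p mu 0 = mu"
| "state_dist P p mu (Suc t) =
     (\<lambda>s'. \<Sum>s\<in>UNIV. \<Sum>a\<in>UNIV. state_dist P p mu t s * p s a * P s a s')"

definition pol_cost :: "('s::finite \<Rightarrow> 'a::finite \<Rightarrow> real) \<Rightarrow> ('s \<Rightarrow> 'a \<Rightarrow> real) \<Rightarrow> 's \<Rightarrow> real" where
  "pol_cost c p s = (\<Sum>a\<in>UNIV. p s a * c s a)"

definition Vfun :: "('s::finite \<Rightarrow> 'a::finite \<Rightarrow> 's \<Rightarrow> real) \<Rightarrow> ('s \<Rightarrow> 'a \<Rightarrow> real) \<Rightarrow> real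
    \<Rightarrow> ('s \<Rightarrow> 'a \<Rightarrow> real) \<Rightarrow> 's \<Rightarrow> real" where
  "Vfun P c \<gamma> p s =
     (\<Sum>t. \<gamma> ^ t * (\<Sum>s'\<in>UNIV. state_dist P p (\<lambda>x. if x = s then 1 else 0) t s' * pol_cost c p s'))"

text \<open>Q^p(s,a) = E[ sum_t gamma^t c(s_t,a_t) | s_0 = s, a_0 = a ]:
  the t = 0 term is c(s,a); s_1 ~ P(.|s,a) and afterwards actions follow p.\<close>
definition Qfun :: "('s::finite \<Rightarrow> 'a::finite \<Rightarrow> 's \<Rightarrow> real) \<Rightarrow> ('s \<Rightarrow> 'a \<Rightarrow> real) \<Rightarrow> real
    \<Rightarrow> ('s \<Rightarrow> 'a \<Rightarrow> real) \<Rightarrow> 's \<Rightarrow> 'a \<Rightarrow> real" where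
  "Qfun P c \<gamma> p s a =
     c s a + (\<Sum>t. \<gamma> ^ Suc t * (\<Sum>s'\<in>UNIV. state_dist P p (P s a) t s' * pol_cost c p s'))"

definition Afun :: "('s::finite \<Rightarrow> 'a::finite \<Rightarrow> 's \<Rightarrow> real) \<Rightarrow> ('s \<Rightarrow> 'a \<Rightarrow> real) \<Rightarrow> real
    \<Rightarrow> ('s \<Rightarrow> 'a \<Rightarrow> real) \<Rightarrow> 's \<Rightarrow> 'a \<Rightarrow> real" where
  "Afun P c \<gamma> p s a = Qfun P c \<gamma> p s a - Vfun P c \<gamma> p s"

definition f_rho :: "('s::finite \<Rightarrow> 'a::finite \<Rightarrow> 's \<Rightarrow> real) \<Rightarrow> ('s \<Rightarrow> 'a \<Rightarrow> real) \<Rightarrow> real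
    \<Rightarrow> ('s \<Rightarrow> real) \<Rightarrow> ('s \<Rightarrow> 'a \<Rightarrow> real) \<Rightarrow> real" where
  "f_rho P c \<gamma> \<rho> p = (\<Sum>s\<in>UNIV. \<rho> s * Vfun P c \<gamma> p s)"

definition is_optimal :: "('s::finite \<Rightarrow> 'a::finite \<Rightarrow> 's \<Rightarrow> real) \<Rightarrow> ('s \<Rightarrow> 'a \<Rightarrow> real) \<Rightarrow> real
    \<Rightarrow> ('s \<Rightarrow> 'a \<Rightarrow> real) \<Rightarrow> bool" where
  "is_optimal P c \<gamma> ps \<longleftrightarrow> is_policy ps \<and>
     (\<forall>p. is_policy p \<longrightarrow> (\<forall>s. Vfun P c \<gamma> ps s \<le> Vfun P c \<gamma> p s))"

end

theory Submission imports Defs begin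

(* By the performance difference lemma, f_rho(p) - f_rho(ps) is the sum over all |S||A| pairs
   (s, a) of d(s) p(a|s) A_ps(s, a), where d is the discounted occupancy of p started from rho.
   Some term is at least the average, and since d(s) p(a|s) <= 1/(1 - gamma), the advantage of
   that pair is at least (1 - gamma)/(|S||A|) times the gap.  Optimality of ps makes A_ps >= 0
   (deviating to a at s forever cannot help), and A_ps averages to 0 under ps(.|s), so a pair
   with positive advantage lies outside the support of ps. *)

lemma is_dist_le_1: "is_dist d \<Longrightarrow> d x \<le> 1"
  unfolding is_dist_def using member_le_sum[of x UNIV d] by simp

lemma is_dist_indicator: "is_dist (indicator {x})"
  by (simp add: is_dist_def indicator_def)

lemma sum_indicator_singleton_mult:
  "(\<Sum>y\<in>UNIV. indicator {x} y * f y) = (f (x::'b::finite) :: real)"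
  by (simp add: indicator_times_eq_if sum.delta)

lemma exists_ge_sum_div_card:
  fixes f :: "'b::finite \<Rightarrow> real"
  shows "\<exists>x. (\<Sum>y\<in>UNIV. f y) / real CARD('b) \<le> f x"
proof -
  have "Max (range f) \<in> range f" by (rule Max_in) auto
  then obtain x where x: "Max (range f) = f x" by blast
  have "(\<Sum>y\<in>UNIV. f y) \<le> real CARD('b) * f x"
    using sum_bounded_above[of UNIV f "f x"] x[symmetric] by simp
  then show ?thesis by (auto simp: divide_le_eq mult.commute)
qed

locale discounted_mdp =
  fixes P :: "'s::finite \<Rightarrow> 'a::finite \<Rightarrow> 's \<Rightarrow> real" and \<gamma> :: real
  assumes kernel: "is_kernel P" and discount_nonneg: "0 \<le> \<gamma>" and discount_less_1: "\<gamma> < 1"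
begin

definition policy_kernel :: "('s \<Rightarrow> 'a \<Rightarrow> real) \<Rightarrow> 's \<Rightarrow> 's \<Rightarrow> real" where
  "policy_kernel p x y = (\<Sum>a\<in>UNIV. p x a * P x a y)"

lemma is_dist_policy_kernel:
  assumes "is_policy p" shows "is_dist (policy_kernel p x)"
proof -
  have "(\<Sum>y\<in>UNIV. policy_kernel p x y) = (\<Sum>a\<in>UNIV. p x a * (\<Sum>y\<in>UNIV. P x a y))"
    unfolding policy_kernel_def sum_distrib_left by (rule sum.swap)
  then show ?thesis
    using assms kernel
    by (auto simp: is_dist_def is_policy_def is_kernel_def policy_kernel_def intro!: sum_nonneg)
qed

lemma state_dist_Suc_eq_policy_kernel:
  "state_dist P p mu (Suc t) y = (\<Sum>x\<in>UNIV. state_dist P p mu t x * policy_kernel p x y)"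
  by (simp add: policy_kernel_def sum_distrib_left mult.assoc)

lemma is_dist_state_dist:
  assumes "is_policy p" "is_dist mu" shows "is_dist (state_dist P p mu t)"
proof (induction t)
  case (Suc t)
  have "(\<Sum>y\<in>UNIV. state_dist P p mu (Suc t) y)
      = (\<Sum>x\<in>UNIV. state_dist P p mu t x * (\<Sum>y\<in>UNIV. policy_kernel p x y))"
    unfolding state_dist_Suc_eq_policy_kernel sum_distrib_left by (rule sum.swap)
  with Suc is_dist_policy_kernel[OF assms(1)] show ?case
    unfolding is_dist_def state_dist_Suc_eq_policy_kernel by (auto intro: sum_nonneg)
qed (use assms in simp)

lemma state_dist_linear:
  "state_dist P p mu t y = (\<Sum>x\<in>UNIV. mu x * state_dist P p (indicator {x}) t y)"
proof (induction t arbitrary: y)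
  case 0
  show ?case by (simp add: indicator_def)
next
  case (Suc t)
  have "state_dist P p mu (Suc t) y
      = (\<Sum>z\<in>UNIV. \<Sum>x\<in>UNIV. mu x * (state_dist P p (indicator {x}) t z * policy_kernel p z y))"
    unfolding state_dist_Suc_eq_policy_kernel Suc by (simp add: sum_distrib_right mult.assoc)
  also have "\<dots> = (\<Sum>x\<in>UNIV. mu x * state_dist P p (indicator {x}) (Suc t) y)"
    unfolding state_dist_Suc_eq_policy_kernel sum_distrib_left by (rule sum.swap)
  finally show ?case .
qed

lemma state_dist_Suc_shift: "state_dist P p mu (Suc t) = state_dist P p (state_dist P p mu 1) t"
  by (induction t) simp_all

lemma state_dist_indicator_1: "state_dist P p (indicator {x}) 1 = policy_kernel p x"
  unfolding fun_eq_iff One_nat_def state_dist_Suc_eq_policy_kernel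
  by (simp add: sum_indicator_singleton_mult)

lemma summable_discounted_state_dist:
  assumes "is_policy p" "is_dist mu"
  shows "summable (\<lambda>t. \<gamma> ^ t * state_dist P p mu t y)"
proof (rule summable_comparison_test)
  have "norm (\<gamma> ^ t * state_dist P p mu t y) \<le> \<gamma> ^ t" for t
    using is_dist_state_dist[OF assms, of t] is_dist_le_1[OF is_dist_state_dist[OF assms, of t]]
      discount_nonneg
    by (simp add: is_dist_def abs_mult mult_left_le)
  then show "\<exists>N. \<forall>t\<ge>N. norm (\<gamma> ^ t * state_dist P p mu t y) \<le> \<gamma> ^ t"
    by blast
  show "summable (\<lambda>t. \<gamma> ^ t)"
    using discount_nonneg discount_less_1 by simp
qed

(* The paper's discounted state visitation measure without its normalising factor 1 - gamma. *)
definition occupancy :: "('s \<Rightarrow> 'a \<Rightarrow> real) \<Rightarrow> ('s \<Rightarrow> real) \<Rightarrow> 's \<Rightarrow> real" where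
  "occupancy p mu y = (\<Sum>t. \<gamma> ^ t * state_dist P p mu t y)"

lemma occupancy_linear:
  assumes "is_policy p"
  shows "occupancy p mu y = (\<Sum>x\<in>UNIV. mu x * occupancy p (indicator {x}) y)"
proof -
  have "occupancy p mu y = (\<Sum>t. \<Sum>x\<in>UNIV. mu x * (\<gamma> ^ t * state_dist P p (indicator {x}) t y))"
    unfolding occupancy_def by (subst state_dist_linear) (simp add: sum_distrib_left mult.left_commute)
  also have "\<dots> = (\<Sum>x\<in>UNIV. mu x * occupancy p (indicator {x}) y)"
    unfolding occupancy_def
    by (subst suminf_sum)
      (auto intro!: sum.cong suminf_mult summable_mult summable_discounted_state_dist assms
        is_dist_indicator)
  finally show ?thesis .
qed

lemma occupancy_unfold:
  assumes p: "is_policy p" and mu: "is_dist mu"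
  shows "occupancy p mu y = mu y + \<gamma> * occupancy p (state_dist P p mu 1) y"
proof -
  let ?f = "\<lambda>t. \<gamma> ^ t * state_dist P p mu t y"
  have "(\<Sum>t. ?f (Suc t)) = (\<Sum>t. \<gamma> * (\<gamma> ^ t * state_dist P p (state_dist P p mu 1) t y))"
    by (simp only: state_dist_Suc_shift[of p mu] power_Suc mult.assoc)
  also have "\<dots> = \<gamma> * occupancy p (state_dist P p mu 1) y"
    unfolding occupancy_def
    by (intro suminf_mult summable_discounted_state_dist p is_dist_state_dist mu)
  finally show ?thesis
    using suminf_split_head[OF summable_discounted_state_dist[OF p mu]]
    by (simp add: occupancy_def)
qed

lemma occupancy_nonneg:
  assumes "is_policy p" "is_dist mu" shows "0 \<le> occupancy p mu y"
  unfolding occupancy_def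
  using is_dist_state_dist[OF assms] discount_nonneg
  by (auto simp: is_dist_def intro!: suminf_nonneg summable_discounted_state_dist assms)

lemma occupancy_le:
  assumes "is_policy p" "is_dist mu" shows "occupancy p mu y \<le> 1 / (1 - \<gamma>)"
proof -
  have "occupancy p mu y \<le> (\<Sum>t. \<gamma> ^ t)"
    unfolding occupancy_def
    using is_dist_le_1[OF is_dist_state_dist[OF assms]] discount_nonneg discount_less_1
    by (intro suminf_le summable_discounted_state_dist assms) (auto intro: mult_left_le)
  also have "\<dots> = 1 / (1 - \<gamma>)"
    using discount_nonneg discount_less_1 by (intro suminf_geometric) simp
  finally show ?thesis .
qed

lemma occupancy_self_ge_1:
  assumes "is_policy p" shows "1 \<le> occupancy p (indicator {x}) x"
  using occupancy_unfold[OF assms is_dist_indicator, of x x] discount_nonneg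
    occupancy_nonneg[OF assms is_dist_state_dist[OF assms is_dist_indicator], of x 1 x]
  by simp

definition discounted_value :: "('s \<Rightarrow> 'a \<Rightarrow> real) \<Rightarrow> ('s \<Rightarrow> real) \<Rightarrow> 's \<Rightarrow> real" where
  "discounted_value p h x = (\<Sum>z\<in>UNIV. occupancy p (indicator {x}) z * h z)"

lemma sum_occupancy_mult:
  assumes "is_policy p"
  shows "(\<Sum>z\<in>UNIV. occupancy p mu z * h z) = (\<Sum>x\<in>UNIV. mu x * discounted_value p h x)"
proof -
  have "(\<Sum>z\<in>UNIV. occupancy p mu z * h z)
      = (\<Sum>z\<in>UNIV. \<Sum>x\<in>UNIV. mu x * (occupancy p (indicator {x}) z * h z))"
    by (subst occupancy_linear[OF assms]) (simp add: sum_distrib_right mult.assoc)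
  also have "\<dots> = (\<Sum>x\<in>UNIV. mu x * discounted_value p h x)"
    unfolding discounted_value_def sum_distrib_left by (rule sum.swap)
  finally show ?thesis .
qed

lemma suminf_discounted_expectation:
  assumes "is_policy p" "is_dist mu"
  shows "(\<Sum>t. \<gamma> ^ t * (\<Sum>z\<in>UNIV. state_dist P p mu t z * h z))
       = (\<Sum>z\<in>UNIV. occupancy p mu z * h z)"
proof -
  have "(\<Sum>t. \<gamma> ^ t * (\<Sum>z\<in>UNIV. state_dist P p mu t z * h z))
      = (\<Sum>t. \<Sum>z\<in>UNIV. \<gamma> ^ t * state_dist P p mu t z * h z)"
    by (simp add: sum_distrib_left mult.assoc)
  also have "\<dots> = (\<Sum>z\<in>UNIV. occupancy p mu z * h z)"
  proof (subst suminf_sum)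
    show "summable (\<lambda>t. \<gamma> ^ t * state_dist P p mu t z * h z)" for z
      by (intro summable_mult2 summable_discounted_state_dist assms)
    show "(\<Sum>z\<in>UNIV. \<Sum>t. \<gamma> ^ t * state_dist P p mu t z * h z)
        = (\<Sum>z\<in>UNIV. occupancy p mu z * h z)"
      unfolding occupancy_def
      by (intro sum.cong refl suminf_mult2[symmetric] summable_discounted_state_dist assms)
  qed
  finally show ?thesis .
qed

lemma discounted_value_bellman:
  assumes "is_policy p"
  shows "discounted_value p h x = h x + \<gamma> * (\<Sum>y\<in>UNIV. policy_kernel p x y * discounted_value p h y)"
proof -
  have "discounted_value p h x
      = (\<Sum>z\<in>UNIV. indicator {x} z * h z) + \<gamma> * (\<Sum>z\<in>UNIV. occupancy p (policy_kernel p x) z * h z)"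
    unfolding discounted_value_def
    by (simp only: occupancy_unfold[OF assms is_dist_indicator, of x] state_dist_indicator_1
        distrib_right sum.distrib sum_distrib_left mult.assoc)
  then show ?thesis
    by (simp add: sum_indicator_singleton_mult sum_occupancy_mult[OF assms])
qed

lemma Vfun_eq_discounted_value:
  assumes "is_policy p" shows "Vfun P c \<gamma> p s = discounted_value p (pol_cost c p) s"
proof -
  have "(\<lambda>x. if x = s then 1 else 0) = (indicator {s} :: 's \<Rightarrow> real)"
    by (auto simp: fun_eq_iff)
  then show ?thesis
    unfolding Vfun_def discounted_value_def
    by (simp only: suminf_discounted_expectation[OF assms is_dist_indicator])
qed

lemma Vfun_bellman:
  assumes "is_policy p"
  shows "Vfun P c \<gamma> p s = pol_cost c p s + \<gamma> * (\<Sum>y\<in>UNIV. policy_kernel p s y * Vfun P c \<gamma> p y)"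
  using discounted_value_bellman[OF assms, of "pol_cost c p" s]
  by (simp add: Vfun_eq_discounted_value[OF assms])

lemma Qfun_bellman:
  assumes "is_policy p"
  shows "Qfun P c \<gamma> p s a = c s a + \<gamma> * (\<Sum>y\<in>UNIV. P s a y * Vfun P c \<gamma> p y)"
proof -
  have mu: "is_dist (P s a)" using kernel by (simp add: is_kernel_def)
  have "summable (\<lambda>t. \<Sum>z\<in>UNIV. \<gamma> ^ t * state_dist P p (P s a) t z * pol_cost c p z)"
    by (intro summable_sum summable_mult2 summable_discounted_state_dist assms mu)
  then have "(\<Sum>t. \<gamma> ^ Suc t * (\<Sum>z\<in>UNIV. state_dist P p (P s a) t z * pol_cost c p z))
      = \<gamma> * (\<Sum>t. \<gamma> ^ t * (\<Sum>z\<in>UNIV. state_dist P p (P s a) t z * pol_cost c p z))"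
    by (subst suminf_mult[symmetric]) (simp_all add: sum_distrib_left mult.assoc)
  then show ?thesis
    unfolding Qfun_def
    by (simp only: suminf_discounted_expectation[OF assms mu] sum_occupancy_mult[OF assms]
        Vfun_eq_discounted_value[OF assms])
qed

lemma sum_policy_mult_kernel:
  "(\<Sum>b\<in>UNIV. p x b * (\<Sum>y\<in>UNIV. P x b y * f y)) = (\<Sum>y\<in>UNIV. policy_kernel p x y * f y)"
  unfolding policy_kernel_def sum_distrib_left sum_distrib_right mult.assoc by (rule sum.swap)

lemma sum_policy_Afun:
  assumes "is_policy p" "is_policy q"
  shows "(\<Sum>b\<in>UNIV. p x b * Afun P c \<gamma> q x b)
       = pol_cost c p x + \<gamma> * (\<Sum>y\<in>UNIV. policy_kernel p x y * Vfun P c \<gamma> q y) - Vfun P c \<gamma> q x"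
proof -
  have "(\<Sum>b\<in>UNIV. p x b * Afun P c \<gamma> q x b)
      = (\<Sum>b\<in>UNIV. p x b * c x b + \<gamma> * (p x b * (\<Sum>y\<in>UNIV. P x b y * Vfun P c \<gamma> q y))
          - p x b * Vfun P c \<gamma> q x)"
    by (intro sum.cong refl) (simp add: Afun_def Qfun_bellman[OF assms(2)] algebra_simps)
  also have "\<dots> = pol_cost c p x + \<gamma> * (\<Sum>b\<in>UNIV. p x b * (\<Sum>y\<in>UNIV. P x b y * Vfun P c \<gamma> q y))
        - (\<Sum>b\<in>UNIV. p x b) * Vfun P c \<gamma> q x"
    by (simp only: sum_subtractf sum.distrib pol_cost_def sum_distrib_left sum_distrib_right)
  finally show ?thesis
    using assms(1) by (simp add: sum_policy_mult_kernel is_policy_def is_dist_def)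
qed

lemma sum_policy_Afun_self: "is_policy q \<Longrightarrow> (\<Sum>b\<in>UNIV. q x b * Afun P c \<gamma> q x b) = 0"
  using sum_policy_Afun[of q q x c] Vfun_bellman[of q c x] by simp

lemma policy_kernel_fixpoint_eq_0:
  assumes p: "is_policy p" and E: "\<And>x. E x = \<gamma> * (\<Sum>y\<in>UNIV. policy_kernel p x y * E y)"
  shows "E x = 0"
proof -
  define m where "m = Max (range (\<lambda>x. \<bar>E x\<bar>))"
  have le_m: "\<bar>E y\<bar> \<le> m" for y
    unfolding m_def by (rule Max_ge) auto
  have "m \<in> range (\<lambda>x. \<bar>E x\<bar>)"
    unfolding m_def by (rule Max_in) auto
  then obtain x0 where x0: "m = \<bar>E x0\<bar>" by blast
  have kernel_x0: "is_dist (policy_kernel p x0)"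
    by (rule is_dist_policy_kernel[OF p])
  have "\<bar>\<Sum>y\<in>UNIV. policy_kernel p x0 y * E y\<bar> \<le> (\<Sum>y\<in>UNIV. policy_kernel p x0 y * m)"
    using kernel_x0 le_m unfolding is_dist_def
    by (intro order.trans[OF sum_abs] sum_mono) (simp add: abs_mult mult_left_mono)
  also have "\<dots> = m"
    using kernel_x0 unfolding is_dist_def sum_distrib_right[symmetric] by simp
  finally have "\<gamma> * \<bar>\<Sum>y\<in>UNIV. policy_kernel p x0 y * E y\<bar> \<le> \<gamma> * m"
    using discount_nonneg by (rule mult_left_mono)
  moreover have "m = \<gamma> * \<bar>\<Sum>y\<in>UNIV. policy_kernel p x0 y * E y\<bar>"
    using x0 E[of x0] discount_nonneg by (simp add: abs_mult)
  ultimately have "(1 - \<gamma>) * m \<le> 0"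
    by (simp add: left_diff_distrib)
  then have "m \<le> 0"
    using discount_less_1 by (simp add: mult_le_0_iff)
  then show ?thesis using le_m[of x] by simp
qed

theorem performance_difference:
  assumes p: "is_policy p" and q: "is_policy q"
  shows "Vfun P c \<gamma> p x - Vfun P c \<gamma> q x
       = discounted_value p (\<lambda>y. \<Sum>b\<in>UNIV. p y b * Afun P c \<gamma> q y b) x"
proof -
  define h where "h = (\<lambda>y. \<Sum>b\<in>UNIV. p y b * Afun P c \<gamma> q y b)"
  define E where "E y = Vfun P c \<gamma> p y - Vfun P c \<gamma> q y - discounted_value p h y" for y
  \<comment> \<open>both sides solve the same Bellman equation under p, so E is a fixpoint of the contraction\<close>
  have "E y = \<gamma> * (\<Sum>z\<in>UNIV. policy_kernel p y z * E z)" for y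
  proof -
    have sum_E: "(\<Sum>z\<in>UNIV. policy_kernel p y z * E z)
        = (\<Sum>z\<in>UNIV. policy_kernel p y z * Vfun P c \<gamma> p z)
          - (\<Sum>z\<in>UNIV. policy_kernel p y z * Vfun P c \<gamma> q z)
          - (\<Sum>z\<in>UNIV. policy_kernel p y z * discounted_value p h z)"
      unfolding E_def right_diff_distrib sum_subtractf ..
    have h: "h y = pol_cost c p y + \<gamma> * (\<Sum>z\<in>UNIV. policy_kernel p y z * Vfun P c \<gamma> q z)
        - Vfun P c \<gamma> q y"
      unfolding h_def by (rule sum_policy_Afun[OF p q])
    have "E y = \<gamma> * (\<Sum>z\<in>UNIV. policy_kernel p y z * Vfun P c \<gamma> p z)
        - \<gamma> * (\<Sum>z\<in>UNIV. policy_kernel p y z * Vfun P c \<gamma> q z)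
        - \<gamma> * (\<Sum>z\<in>UNIV. policy_kernel p y z * discounted_value p h z)"
      using Vfun_bellman[OF p, of c y] discounted_value_bellman[OF p, of h y] h
      unfolding E_def by linarith
    then show ?thesis
      unfolding sum_E right_diff_distrib .
  qed
  then have "E x = 0"
    by (rule policy_kernel_fixpoint_eq_0[OF p])
  then show ?thesis
    unfolding E_def h_def by simp
qed

lemma optimal_Afun_nonneg:
  assumes opt: "is_optimal P c \<gamma> q"
  shows "0 \<le> Afun P c \<gamma> q s a"
proof -
  have q: "is_policy q" using opt by (simp add: is_optimal_def)
  define q' where "q' = q(s := indicator {a})"
  have q': "is_policy q'"
    using q by (auto simp: is_policy_def q'_def is_dist_indicator)
  have h: "(\<lambda>y. \<Sum>b\<in>UNIV. q' y b * Afun P c \<gamma> q y b) = (\<lambda>y. indicator {s} y * Afun P c \<gamma> q s a)"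
    using sum_policy_Afun_self[OF q] by (auto simp: q'_def sum_indicator_singleton_mult)
  have "Vfun P c \<gamma> q' s - Vfun P c \<gamma> q s = occupancy q' (indicator {s}) s * Afun P c \<gamma> q s a"
    unfolding performance_difference[OF q' q] h discounted_value_def
    by (simp add: mult.left_commute[of _ "indicator {s} _"] sum_indicator_singleton_mult)
  moreover have "Vfun P c \<gamma> q s \<le> Vfun P c \<gamma> q' s"
    using opt q' by (simp add: is_optimal_def)
  ultimately have "0 \<le> occupancy q' (indicator {s}) s * Afun P c \<gamma> q s a"
    by simp
  then show ?thesis
    using occupancy_self_ge_1[OF q', of s] by (simp add: zero_le_mult_iff)
qed

lemma optimal_Afun_pos_imp_zero:
  assumes opt: "is_optimal P c \<gamma> q" and pos: "0 < Afun P c \<gamma> q s a"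
  shows "q s a = 0"
proof -
  have q: "is_policy q" using opt by (simp add: is_optimal_def)
  have "\<forall>b\<in>UNIV. q s b * Afun P c \<gamma> q s b = 0"
    using sum_policy_Afun_self[OF q, of s c] optimal_Afun_nonneg[OF opt, of s] q
    by (subst sum_nonneg_eq_0_iff[symmetric]) (auto simp: is_policy_def is_dist_def)
  then have "q s a * Afun P c \<gamma> q s a = 0" by simp
  then show ?thesis using pos by simp
qed

lemma f_rho_diff_eq_sum_occupancy:
  assumes p: "is_policy p" and q: "is_policy q"
  shows "f_rho P c \<gamma> \<rho> p - f_rho P c \<gamma> \<rho> q
       = (\<Sum>(z, b)\<in>UNIV. occupancy p \<rho> z * p z b * Afun P c \<gamma> q z b)"
proof -
  have "f_rho P c \<gamma> \<rho> p - f_rho P c \<gamma> \<rho> q = (\<Sum>s\<in>UNIV. \<rho> s * (Vfun P c \<gamma> p s - Vfun P c \<gamma> q s))"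
    unfolding f_rho_def by (simp add: right_diff_distrib sum_subtractf)
  also have "\<dots> = (\<Sum>z\<in>UNIV. occupancy p \<rho> z * (\<Sum>b\<in>UNIV. p z b * Afun P c \<gamma> q z b))"
    unfolding performance_difference[OF p q] sum_occupancy_mult[OF p] ..
  also have "\<dots> = (\<Sum>(z, b)\<in>UNIV. occupancy p \<rho> z * p z b * Afun P c \<gamma> q z b)"
    by (simp add: sum_distrib_left mult.assoc flip: UNIV_Times_UNIV sum.cartesian_product)
  finally show ?thesis .
qed

lemma occupancy_weighted_bound:
  assumes p: "is_policy p" and mu: "is_dist mu" and pos: "0 < occupancy p mu z * p z b * w"
  shows "0 < p z b" "0 < w" "(1 - \<gamma>) * (occupancy p mu z * p z b * w) \<le> w"
proof -
  have occ: "0 \<le> occupancy p mu z" "(1 - \<gamma>) * occupancy p mu z \<le> 1"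
    using occupancy_nonneg[OF p mu] occupancy_le[OF p mu, of z] discount_less_1
    by (auto simp: field_simps)
  have pol: "0 \<le> p z b" "p z b \<le> 1"
    using p by (auto simp: is_policy_def is_dist_def is_dist_le_1)
  have "0 < occupancy p mu z * p z b" "0 < w"
    using pos mult_nonneg_nonneg[OF occ(1) pol(1)] by (auto simp: zero_less_mult_iff)
  then show "0 < p z b" "0 < w"
    using occ(1) by (auto simp: zero_less_mult_iff)
  have "(1 - \<gamma>) * occupancy p mu z * p z b \<le> (1 - \<gamma>) * occupancy p mu z"
    using occ(1) pol(2) discount_less_1 by (intro mult_left_le) auto
  also have "\<dots> \<le> 1" by (rule occ(2))
  finally show "(1 - \<gamma>) * (occupancy p mu z * p z b * w) \<le> w"
    using \<open>0 < w\<close> by (simp add: mult_le_cancel_right1 mult.assoc)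
qed

end

theorem lemma3p7:
  fixes P :: "'s::finite \<Rightarrow> 'a::finite \<Rightarrow> 's \<Rightarrow> real"
    and c :: "'s \<Rightarrow> 'a \<Rightarrow> real"
    and \<gamma> :: real
    and \<rho> :: "'s \<Rightarrow> real"
    and ps p :: "'s \<Rightarrow> 'a \<Rightarrow> real"
  assumes kernel: "is_kernel P"
    and gamma: "0 \<le> \<gamma>" "\<gamma> < 1"
    and opt: "is_optimal P c \<gamma> ps"
    and rho_dist: "is_dist \<rho>"
    and rho_pos: "\<forall>s. \<rho> s > 0"
    and pol: "is_policy p"
    and nonopt: "f_rho P c \<gamma> \<rho> p - f_rho P c \<gamma> \<rho> ps > 0"
  shows "\<exists>s a. ps s a = 0 \<and> p s a > 0 \<and>
           Afun P c \<gamma> ps s a \<ge>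
             (1 - \<gamma>) / (real CARD('s) * real CARD('a)) * (f_rho P c \<gamma> \<rho> p - f_rho P c \<gamma> \<rho> ps) \<and>
           (1 - \<gamma>) / (real CARD('s) * real CARD('a)) * (f_rho P c \<gamma> \<rho> p - f_rho P c \<gamma> \<rho> ps) > 0"
proof -
  interpret discounted_mdp P \<gamma> using kernel gamma by unfold_locales
  define D where "D = f_rho P c \<gamma> \<rho> p - f_rho P c \<gamma> \<rho> ps"
  define F where "F = (\<lambda>(z, b). occupancy p \<rho> z * p z b * Afun P c \<gamma> ps z b)"
  have D: "D = (\<Sum>x\<in>UNIV. F x)"
    using opt pol by (simp add: D_def F_def is_optimal_def f_rho_diff_eq_sum_occupancy)
  obtain s a where "D / (real CARD('s) * real CARD('a)) \<le> F (s, a)"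
    using exists_ge_sum_div_card[of F] by (auto simp: D)
  moreover have D_pos: "0 < D / (real CARD('s) * real CARD('a))"
    using nonopt by (simp add: D_def)
  ultimately have F_pos: "0 < occupancy p \<rho> s * p s a * Afun P c \<gamma> ps s a"
    by (simp add: F_def)
  have "(1 - \<gamma>) / (real CARD('s) * real CARD('a)) * D
      = (1 - \<gamma>) * (D / (real CARD('s) * real CARD('a)))"
    by simp
  also have "\<dots> \<le> (1 - \<gamma>) * F (s, a)"
    using \<open>D / _ \<le> F (s, a)\<close> gamma by (intro mult_left_mono) auto
  also have "\<dots> \<le> Afun P c \<gamma> ps s a"
    using occupancy_weighted_bound(3)[OF pol rho_dist F_pos] by (simp add: F_def)
  finally have bound: "(1 - \<gamma>) / (real CARD('s) * real CARD('a)) * D \<le> Afun P c \<gamma> ps s a" .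
  have "0 < (1 - \<gamma>) / (real CARD('s) * real CARD('a)) * D"
    using nonopt gamma by (intro mult_pos_pos divide_pos_pos) (simp_all add: D_def)
  then show ?thesis
    using bound occupancy_weighted_bound(1,2)[OF pol rho_dist F_pos]
      optimal_Afun_pos_imp_zero[OF opt]
    unfolding D_def by blast
qed

end
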